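(* Let $u_0\in H^4(\mathbb{R})$ be non-trivial, let $u$ be the solution of the Degasperis–Procesi equation with $u(x,0)=u_0(x)$ and maximal existence time $T>0$, let $\mathcal{S}=\mathbb{R}\times(0,T)$, and let $U$ be a simply connected component of $\mathcal{S}$ on which the forms $\omega_1,\omega_2$ below are linearly independent ($\omega_1\wedge\omega_2\neq0$). Then one can find smooth real-valued functions $a,b,c$, locally defined on $U$, such that $$\omega_{13}=a\omega_1+b\omega_2,\qquad \omega_{23}=b\omega_1+c\omega_2$$ are connection forms which, jointly with $\omega_1$, $\omega_2$ and $\omega_{12}:=\omega_3$, determine the first two fundamental forms of a pseudospherical surface; that is, $d\omega_1=\omega_{12}\wedge\omega_2$, $d\omega_2=\omega_1\wedge\omega_{12}$, $\omega_1\wedge\omega_{13}+\omega_2\wedge\omega_{23}=0$, $d\omega_{12}=-\omega_{13}\wedge\omega_{23}$, $d\omega_{13}=\omega_{12}\wedge\omega_{23}$, $d\omega_{23}=-\omega_{12}\wedge\omega_{13}$.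
   Context: Degasperis–Procesi equation: $u_t+uu_x+\tfrac32\partial_x(1-\partial_x^2)^{-1}(u^2)=0$ with $(1-\partial_x^2)^{-1}f=G\ast f$, $G(x)=\tfrac12e^{-|x|}$; for $u_0\in H^4(\mathbb{R})$ it has a unique solution in $C^0([0,T);H^4(\mathbb{R}))\cap C^1([0,T);H^3(\mathbb{R}))$ on a maximal interval. With $m=u-u_{xx}$, $F=u_x^2-2uu_x+uu_{xx}$, real $\mu$ and a fixed sign choice: $\omega_1=m\,dx+F\,dt$, $\omega_2=(\mu m\pm2\sqrt{1+\mu^2})dx+\mu F\,dt$, $\omega_3=(\pm\sqrt{1+\mu^2}\,m+2\mu)dx\pm\sqrt{1+\mu^2}\,F\,dt$. By the fundamental theorem of surface theory (Bonnet), $C^1$ one-forms $\omega_1,\omega_2,\omega_{12},\omega_{13},\omega_{23}$ with $\omega_1\wedge\omega_2\neq0$ satisfying the listed equations determine locally a surface in $\mathbb{R}^3$ up to a Euclidean motion, with first fundamental form $\omega_1^2+\omega_2^2$ and second fundamental form determined by $a,b,c$. *)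

theory Defs
  imports "HOL-Analysis.Analysis"
begin

text \<open>D is a chain of derivatives of f up to order k: D 0 = f, classical derivatives
  D j' = D (j+1) for j+1 < k, the (k-1)-st derivative is an indefinite integral of D k
  (weak k-th derivative), and all D j (j \<le> k) are square integrable.\<close>
definition sob_derivs :: "nat \<Rightarrow> (real \<Rightarrow> real) \<Rightarrow> (nat \<Rightarrow> real \<Rightarrow> real) \<Rightarrow> bool" where
  "sob_derivs k f D \<longleftrightarrow>
     D 0 = f \<and>
     (\<forall>j x. Suc j < k \<longrightarrow> (D j has_real_derivative D (Suc j) x) (at x)) \<and>
     (1 \<le> k \<longrightarrow> (\<forall>a b. a \<le> b \<longrightarrow> (D k has_integral (D (k - 1) b - D (k - 1) a)) {a..b})) \<and>
     (\<forall>j\<le>k. D j \<in> borel_measurable lborel \<and> integrable lborel (\<lambda>x. (D j x)\<^sup>2))"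

definition sobolev :: "nat \<Rightarrow> (real \<Rightarrow> real) \<Rightarrow> bool" where
  "sobolev k f \<longleftrightarrow> (\<exists>D. sob_derivs k f D)"

definition hnorm :: "nat \<Rightarrow> (real \<Rightarrow> real) \<Rightarrow> real" where
  "hnorm k f = sqrt (\<Sum>j\<le>k. LINT x|lborel. ((SOME D. sob_derivs k f D) j x)\<^sup>2)"

definition G :: "real \<Rightarrow> real" where
  "G x = exp (- \<bar>x\<bar>) / 2"

text \<open>u x t is the solution; T may be infinite.  u \<in> C^0([0,T);H^4) \<inter> C^1([0,T);H^3),
  with time derivative v, and u_t + u u_x + 3/2 d/dx (G * u^2) = 0.\<close>
definition dp_solution :: "(real \<Rightarrow> real) \<Rightarrow> ereal \<Rightarrow> (real \<Rightarrow> real \<Rightarrow> real) \<Rightarrow> bool" where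
  "dp_solution u0 T u \<longleftrightarrow>
     (let I = {t::real. 0 \<le> t \<and> ereal t < T} in
     (\<forall>x. u x 0 = u0 x) \<and>
     (\<forall>t\<in>I. sobolev 4 (\<lambda>x. u x t)) \<and>
     (\<forall>t\<in>I. ((\<lambda>s. hnorm 4 (\<lambda>x. u x s - u x t)) \<longlongrightarrow> 0) (at t within I)) \<and>
     (\<exists>v. (\<forall>t\<in>I. sobolev 3 (\<lambda>x. v x t)) \<and>
          (\<forall>t\<in>I. ((\<lambda>s. hnorm 3 (\<lambda>x. v x s - v x t)) \<longlongrightarrow> 0) (at t within I)) \<and>
          (\<forall>t\<in>I. ((\<lambda>s. hnorm 3 (\<lambda>x. (u x s - u x t) / (s - t) - v x t)) \<longlongrightarrow> 0) (at t within I)) \<and>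
          (\<forall>t\<in>I. \<forall>x. v x t + u x t * deriv (\<lambda>y. u y t) x
               + 3/2 * deriv (\<lambda>y. LINT z|lborel. G (y - z) * (u z t)\<^sup>2) x = 0)))"

text \<open>A one-form f dx + g dt is represented by the pair (f, g); two-forms h dx\<and>dt by h.\<close>
type_synonym form1 = "((real \<times> real) \<Rightarrow> real) \<times> ((real \<times> real) \<Rightarrow> real)"

definition wedge :: "form1 \<Rightarrow> form1 \<Rightarrow> (real \<times> real) \<Rightarrow> real" where
  "wedge \<omega> \<eta> p = fst \<omega> p * snd \<eta> p - snd \<omega> p * fst \<eta> p"

definition ext_deriv_on :: "(real \<times> real) set \<Rightarrow> form1 \<Rightarrow> ((real \<times> real) \<Rightarrow> real) \<Rightarrow> bool" where
  "ext_deriv_on V \<omega> h \<longleftrightarrow>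
     (\<forall>p\<in>V. \<exists>f' g'. (fst \<omega> has_derivative f') (at p) \<and> (snd \<omega> has_derivative g') (at p) \<and>
        h p = g' (1, 0) - f' (0, 1))"

definition form_add :: "form1 \<Rightarrow> form1 \<Rightarrow> form1" where
  "form_add \<omega> \<eta> = (\<lambda>p. fst \<omega> p + fst \<eta> p, \<lambda>p. snd \<omega> p + snd \<eta> p)"

definition form_scale :: "((real \<times> real) \<Rightarrow> real) \<Rightarrow> form1 \<Rightarrow> form1" where
  "form_scale a \<omega> = (\<lambda>p. a p * fst \<omega> p, \<lambda>p. a p * snd \<omega> p)"

text \<open>C^\<infinity> on V: all iterated partial derivatives exist (D (True#js) = \<partial>_x D js,
  D (False#js) = \<partial>_t D js) as Frechet derivatives at every point of V.\<close>
definition smooth_on :: "(real \<times> real) set \<Rightarrow> ((real \<times> real) \<Rightarrow> real) \<Rightarrow> bool" where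
  "smooth_on V f \<longleftrightarrow> (\<exists>D :: bool list \<Rightarrow> (real \<times> real) \<Rightarrow> real. D [] = f \<and>
     (\<forall>js. \<forall>p\<in>V. (D js has_derivative (\<lambda>h. fst h * D (True # js) p + snd h * D (False # js) p)) (at p)))"

definition ux :: "(real \<Rightarrow> real \<Rightarrow> real) \<Rightarrow> real \<times> real \<Rightarrow> real" where
  "ux u p = deriv (\<lambda>y. u y (snd p)) (fst p)"

definition uxx :: "(real \<Rightarrow> real \<Rightarrow> real) \<Rightarrow> real \<times> real \<Rightarrow> real" where
  "uxx u p = deriv (\<lambda>y. deriv (\<lambda>z. u z (snd p)) y) (fst p)"

definition mm :: "(real \<Rightarrow> real \<Rightarrow> real) \<Rightarrow> real \<times> real \<Rightarrow> real" where
  "mm u p = u (fst p) (snd p) - uxx u p"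

definition FF :: "(real \<Rightarrow> real \<Rightarrow> real) \<Rightarrow> real \<times> real \<Rightarrow> real" where
  "FF u p = (ux u p)\<^sup>2 - 2 * u (fst p) (snd p) * ux u p + u (fst p) (snd p) * uxx u p"

definition om1 :: "(real \<Rightarrow> real \<Rightarrow> real) \<Rightarrow> form1" where
  "om1 u = (mm u, FF u)"

text \<open>\<sigma> \<in> {1,-1} is the fixed sign choice \<plusminus>.\<close>
definition om2 :: "(real \<Rightarrow> real \<Rightarrow> real) \<Rightarrow> real \<Rightarrow> real \<Rightarrow> form1" where
  "om2 u \<mu> \<sigma> = (\<lambda>p. \<mu> * mm u p + \<sigma> * 2 * sqrt (1 + \<mu>\<^sup>2), \<lambda>p. \<mu> * FF u p)"

definition om3 :: "(real \<Rightarrow> real \<Rightarrow> real) \<Rightarrow> real \<Rightarrow> real \<Rightarrow> form1" where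
  "om3 u \<mu> \<sigma> = (\<lambda>p. \<sigma> * sqrt (1 + \<mu>\<^sup>2) * mm u p + 2 * \<mu>, \<lambda>p. \<sigma> * sqrt (1 + \<mu>\<^sup>2) * FF u p)"

end

theory Submission
  imports Defs
begin

text \<open>The exterior derivatives of \<open>\<omega>\<^sub>1, \<omega>\<^sub>2, \<omega>\<^sub>1\<^sub>2\<close> are multiples of \<open>(F\<^sub>x - m\<^sub>t) dx \<and> dt\<close>, so
  \<open>d\<omega>\<^sub>1 = \<omega>\<^sub>1\<^sub>2 \<and> \<omega>\<^sub>2\<close>, \<open>d\<omega>\<^sub>2 = \<omega>\<^sub>1 \<and> \<omega>\<^sub>1\<^sub>2\<close> and \<open>d\<omega>\<^sub>1\<^sub>2 = \<omega>\<^sub>1 \<and> \<omega>\<^sub>2\<close> all follow from \<open>m\<^sub>t = F\<^sub>x + 2 F\<close>.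
  This is the DP equation written for \<open>m = u - u\<^sub>x\<^sub>x\<close>: the nonlocal term cancels in \<open>u\<^sub>t - u\<^sub>x\<^sub>x\<^sub>t\<close>
  because \<open>G\<close> inverts \<open>1 - \<partial>\<^sub>x\<^sup>2\<close>. Joint differentiability of \<open>m\<close> and \<open>F\<close> in \<open>(x, t)\<close> comes from
  \<open>u \<in> C\<^sup>1([0, T); H\<^sup>3)\<close> through the embedding \<open>H\<^sup>1 \<subseteq> L\<^sup>\<infinity>\<close>.

  For \<open>a, b, c\<close> depending on \<open>x\<close> alone, \<open>\<omega>\<^sub>1 \<and> \<omega>\<^sub>1\<^sub>3 + \<omega>\<^sub>2 \<and> \<omega>\<^sub>2\<^sub>3 = 0\<close> is automatic,
  \<open>d\<omega>\<^sub>1\<^sub>2 = -\<omega>\<^sub>1\<^sub>3 \<and> \<omega>\<^sub>2\<^sub>3\<close> becomes the Gauss equation \<open>a c - b\<^sup>2 = -1\<close> and the Codazzi equations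
  become two linear ODEs. They are solved explicitly through \<open>\<zeta> x = sqrt (exp (4 (x - x0)) - 1)\<close>,
  which is smooth for \<open>x > x0\<close>, so \<open>V = U \<inter> {x > x0}\<close> works whenever \<open>x0\<close> is left of \<open>p\<close>.\<close>

lemma abs_le_half_plus_sq_div:
  fixes a e :: real
  assumes "e > 0"
  shows "\<bar>a\<bar> \<le> e/2 + a\<^sup>2/(2*e)"
proof -
  have "0 \<le> (\<bar>a\<bar> - e)\<^sup>2" by simp
  then have "2*e*\<bar>a\<bar> \<le> a\<^sup>2 + e\<^sup>2" by (simp add: power2_eq_square algebra_simps)
  with assms show ?thesis by (simp add: field_simps power2_eq_square)
qed

lemma has_integral_of_has_real_derivative:
  fixes f f' :: "real \<Rightarrow> real"
  assumes "\<And>x. (f has_real_derivative f' x) (at x)" and "a \<le> b"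
  shows "(f' has_integral (f b - f a)) {a..b}"
  using assms
  by (intro fundamental_theorem_of_calculus)
     (auto simp: has_real_derivative_iff_has_vector_derivative[symmetric] intro: has_field_derivative_at_within)

lemma isCont_of_has_integral_increments:
  fixes g g' :: "real \<Rightarrow> real"
  assumes "\<And>a b. a \<le> b \<Longrightarrow> (g' has_integral (g b - g a)) {a..b}"
  shows "isCont g x"
proof -
  have "g' integrable_on {x - 1..x + 1}" using assms[of "x - 1" "x + 1"] by auto
  then have "continuous_on {x - 1..x + 1} (\<lambda>y. g (x - 1) + integral {x - 1..y} g')"
    by (intro continuous_intros indefinite_integral_continuous_1)
  moreover have "g (x - 1) + integral {x - 1..y} g' = g y" if "y \<in> {x - 1..x + 1}" for y
    using assms[of "x - 1" y] that by (simp add: integral_unique)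
  ultimately have "continuous_on {x - 1..x + 1} g" by (rule continuous_on_eq)
  then show ?thesis by (rule continuous_on_interior) auto
qed

text \<open>One-dimensional Sobolev embedding: compare \<open>g x\<close> with its mean over \<open>[x, x+1]\<close>
  and bound both the oscillation and the mean by Young's inequality.\<close>
lemma abs_le_of_has_integral_square_integrable:
  fixes g g' :: "real \<Rightarrow> real"
  assumes g': "\<And>a b. a \<le> b \<Longrightarrow> (g' has_integral (g b - g a)) {a..b}"
    and g_sq: "(\<lambda>x. (g x)\<^sup>2) integrable_on UNIV" and g'_sq: "(\<lambda>x. (g' x)\<^sup>2) integrable_on UNIV"
    and e: "e > 0"
  shows "\<bar>g x\<bar> \<le> e + (integral UNIV (\<lambda>x. (g x)\<^sup>2) + integral UNIV (\<lambda>x. (g' x)\<^sup>2)) / (2*e)"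
proof -
  define J where "J = integral UNIV (\<lambda>x. (g x)\<^sup>2)"
  define J' where "J' = integral UNIV (\<lambda>x. (g' x)\<^sup>2)"
  have g_sq_on: "(\<lambda>x. (g x)\<^sup>2) integrable_on {a..b}" for a b
    by (rule integrable_on_subinterval[OF g_sq]) auto
  have g'_sq_on: "(\<lambda>x. (g' x)\<^sup>2) integrable_on {a..b}" for a b
    by (rule integrable_on_subinterval[OF g'_sq]) auto
  have young_int: "(\<lambda>z. e/2 + (g' z)\<^sup>2/(2*e)) integrable_on {a..b}" for a b
    by (intro integrable_add integrable_on_const integrable_on_divide g'_sq_on) auto
  have oscillation: "\<bar>g y - g x\<bar> \<le> e/2 + J'/(2*e)" if y: "y \<in> {x..x+1}" for y
  proof -
    have "(g' has_integral (g y - g x)) {x..y}" using g' y by auto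
    then have eq: "g y - g x = integral {x..y} g'" and int: "g' integrable_on {x..y}"
      by (auto simp: integral_unique integrable_on_def)
    have "\<bar>g y - g x\<bar> \<le> integral {x..y} (\<lambda>z. e/2 + (g' z)\<^sup>2/(2*e))"
      using integral_norm_bound_integral[OF int young_int] abs_le_half_plus_sq_div[OF e] eq by auto
    also have "\<dots> \<le> integral {x..x+1} (\<lambda>z. e/2 + (g' z)\<^sup>2/(2*e))"
      using y e by (intro integral_subset_le young_int) auto
    also have "\<dots> = e/2 + integral {x..x+1} (\<lambda>x. (g' x)\<^sup>2) / (2*e)"
      by (subst integral_add) (auto intro: integrable_on_divide g'_sq_on)
    also have "\<dots> \<le> e/2 + J'/(2*e)"
      unfolding J'_def using e
      by (intro add_left_mono divide_right_mono integral_subset_le g'_sq_on g'_sq) auto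
    finally show ?thesis .
  qed
  have "\<bar>g x\<bar> - e - J'/(2*e) \<le> (g y)\<^sup>2/(2*e)" if "y \<in> {x..x+1}" for y
    using oscillation[OF that] abs_le_half_plus_sq_div[OF e, of "g y"] by linarith
  then have "integral {x..x+1} (\<lambda>y. \<bar>g x\<bar> - e - J'/(2*e)) \<le> integral {x..x+1} (\<lambda>y. (g y)\<^sup>2/(2*e))"
    by (intro integral_le integrable_on_divide g_sq_on) auto
  then have "\<bar>g x\<bar> - e - J'/(2*e) \<le> integral {x..x+1} (\<lambda>x. (g x)\<^sup>2)/(2*e)" by simp
  also have "\<dots> \<le> J/(2*e)"
    unfolding J_def using e by (intro divide_right_mono integral_subset_le g_sq_on g_sq) auto
  finally show ?thesis unfolding J_def J'_def by (simp add: add_divide_distrib)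
qed

lemma sob_derivs_lincomb:
  assumes D: "sob_derivs k f D" and E: "sob_derivs k g E"
  shows "sob_derivs k (\<lambda>x. \<alpha> * f x + \<beta> * g x) (\<lambda>j x. \<alpha> * D j x + \<beta> * E j x)"
proof -
  have sq_bound: "(\<alpha>*c + \<beta>*d)\<^sup>2 \<le> 2*\<alpha>\<^sup>2*c\<^sup>2 + 2*\<beta>\<^sup>2*d\<^sup>2" for c d :: real
  proof -
    have "0 \<le> (\<alpha>*c - \<beta>*d)\<^sup>2" by simp
    then show ?thesis by (simp add: power2_eq_square algebra_simps)
  qed
  have measurable: "(\<lambda>x. \<alpha> * D j x + \<beta> * E j x) \<in> borel_measurable lborel" if "j \<le> k" for j
  proof -
    have "D j \<in> borel_measurable lborel" "E j \<in> borel_measurable lborel"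
      using D E that unfolding sob_derivs_def by auto
    then show ?thesis by measurable
  qed
  have integrable: "integrable lborel (\<lambda>x. (\<alpha> * D j x + \<beta> * E j x)\<^sup>2)" if j: "j \<le> k" for j
  proof (rule Bochner_Integration.integrable_bound)
    show "(\<lambda>x. (\<alpha> * D j x + \<beta> * E j x)\<^sup>2) \<in> borel_measurable lborel"
      using measurable[OF j] by measurable
    show "integrable lborel (\<lambda>x. 2*\<alpha>\<^sup>2*(D j x)\<^sup>2 + 2*\<beta>\<^sup>2*(E j x)\<^sup>2)"
      using D E j unfolding sob_derivs_def
      by (intro Bochner_Integration.integrable_add Bochner_Integration.integrable_mult_right) auto
    show "AE x in lborel. norm ((\<alpha> * D j x + \<beta> * E j x)\<^sup>2) \<le> norm (2*\<alpha>\<^sup>2*(D j x)\<^sup>2 + 2*\<beta>\<^sup>2*(E j x)\<^sup>2)"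
      using sq_bound by (auto simp: mult.assoc)
  qed
  have "((\<lambda>x. \<alpha> * D k x + \<beta> * E k x) has_integral
      (\<alpha> * D (k - 1) b + \<beta> * E (k - 1) b - (\<alpha> * D (k - 1) a + \<beta> * E (k - 1) a))) {a..b}"
    if "1 \<le> k" "a \<le> b" for a b
  proof -
    have "((\<lambda>x. \<alpha> * D k x + \<beta> * E k x) has_integral
        (\<alpha> * (D (k - 1) b - D (k - 1) a) + \<beta> * (E (k - 1) b - E (k - 1) a))) {a..b}"
      using D E that unfolding sob_derivs_def by (intro has_integral_add has_integral_mult_right) auto
    then show ?thesis by (simp add: algebra_simps)
  qed
  moreover have "((\<lambda>x. \<alpha> * D j x + \<beta> * E j x) has_real_derivative \<alpha> * D (Suc j) x + \<beta> * E (Suc j) x) (at x)"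
    if "Suc j < k" for j x
    using D E that unfolding sob_derivs_def by (auto intro!: derivative_eq_intros)
  moreover have "D 0 = f" "E 0 = g" using D E unfolding sob_derivs_def by auto
  ultimately show ?thesis
    using measurable integrable unfolding sob_derivs_def by simp
qed

lemma sob_derivs_has_integral:
  assumes "sob_derivs k f D" "Suc j \<le> k" "a \<le> b"
  shows "(D (Suc j) has_integral (D j b - D j a)) {a..b}"
proof (cases "Suc j < k")
  case True
  with assms show ?thesis
    unfolding sob_derivs_def by (blast intro: has_integral_of_has_real_derivative)
next
  case False
  with assms show ?thesis unfolding sob_derivs_def by (auto simp: le_Suc_eq)
qed

lemma sob_derivs_SucD:
  assumes D: "sob_derivs (Suc k) f D"
  shows "sob_derivs k f D"
proof -
  have "(D k has_integral (D (k - 1) b - D (k - 1) a)) {a..b}" if "1 \<le> k" "a \<le> b" for a b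
    using sob_derivs_has_integral[OF D, of "k - 1"] that by simp
  with D show ?thesis unfolding sob_derivs_def by simp
qed

lemma sob_derivs_unique:
  assumes D: "sob_derivs k f D" and E: "sob_derivs k f E" and "j < k"
  shows "D j = E j"
  using \<open>j < k\<close>
proof (induction j)
  case 0
  with D E show ?case unfolding sob_derivs_def by auto
next
  case (Suc j)
  show ?case
  proof
    fix x
    have "(D j has_real_derivative D (Suc j) x) (at x)" "(E j has_real_derivative E (Suc j) x) (at x)"
      using D E Suc.prems unfolding sob_derivs_def by auto
    with Suc show "D (Suc j) x = E (Suc j) x" by (auto intro: DERIV_unique)
  qed
qed

lemma sob_derivs_abs_le:
  assumes D: "sob_derivs k f D" and j: "Suc j \<le> k" and e: "e > 0"
  shows "\<bar>D j x\<bar> \<le> e + (\<Sum>i\<le>k. LINT y|lborel. (D i y)\<^sup>2) / (2*e)"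
proof -
  have sq_int: "integrable lborel (\<lambda>x. (D i x)\<^sup>2)" if "i \<le> k" for i
    using D that unfolding sob_derivs_def by auto
  have "\<bar>D j x\<bar> \<le> e + (integral UNIV (\<lambda>x. (D j x)\<^sup>2) + integral UNIV (\<lambda>x. (D (Suc j) x)\<^sup>2)) / (2*e)"
    using j by (intro abs_le_of_has_integral_square_integrable sob_derivs_has_integral[OF D]
        integrable_on_lborel sq_int e) auto
  also have "integral UNIV (\<lambda>x. (D j x)\<^sup>2) + integral UNIV (\<lambda>x. (D (Suc j) x)\<^sup>2)
      = (\<Sum>i\<in>{j, Suc j}. LINT y|lborel. (D i y)\<^sup>2)"
    using sq_int j by (simp add: integral_lborel)
  also have "\<dots> \<le> (\<Sum>i\<le>k. LINT y|lborel. (D i y)\<^sup>2)"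
    using j by (intro sum_mono2) auto
  finally show ?thesis using e by (smt (verit) divide_right_mono)
qed

lemma sob_derivs_abs_le_hnorm:
  assumes D: "sob_derivs k f D" and j: "Suc j \<le> k" and e: "e > 0"
  shows "\<bar>D j x\<bar> \<le> e + (hnorm k f)\<^sup>2 / (2*e)"
proof -
  define D' where "D' = (SOME D. sob_derivs k f D)"
  have D': "sob_derivs k f D'"
    unfolding D'_def by (rule someI[where P="sob_derivs k f", OF D])
  have "(hnorm k f)\<^sup>2 = (\<Sum>i\<le>k. LINT x|lborel. (D' i x)\<^sup>2)"
    unfolding hnorm_def D'_def by (subst real_sqrt_pow2) (auto intro!: sum_nonneg)
  moreover have "D j = D' j" using sob_derivs_unique[OF D D'] j by simp
  ultimately show ?thesis using sob_derivs_abs_le[OF D' j e] by simp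
qed

text \<open>Splitting the kernel \<open>exp (- |y - z|)\<close> at \<open>z = y\<close> writes \<open>G * w\<close> as a combination of two
  one-sided integrals, each differentiable in its endpoint.\<close>
definition exp_conv_left :: "(real \<Rightarrow> real) \<Rightarrow> real \<Rightarrow> real" where
  "exp_conv_left w y = integral {..y} (\<lambda>z. exp z * w z)"

definition exp_conv_right :: "(real \<Rightarrow> real) \<Rightarrow> real \<Rightarrow> real" where
  "exp_conv_right w y = integral {y..} (\<lambda>z. exp (- z) * w z)"

definition G_conv_deriv :: "(real \<Rightarrow> real) \<Rightarrow> real \<Rightarrow> real" where
  "G_conv_deriv w y = (exp y * exp_conv_right w y - exp (- y) * exp_conv_left w y) / 2"

lemma negligible_open_closed_ray_diff:
  fixes y :: real
  shows "negligible {z \<in> {y<..} - {y..}. f z \<noteq> (0::real)}"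
  "negligible {z \<in> {y..} - {y<..}. f z \<noteq> (0::real)}"
  by (rule negligible_subset[OF negligible_sing[of y]], auto)+

context
  fixes w :: "real \<Rightarrow> real"
  assumes w_int: "integrable lborel w" and w_cont: "continuous_on UNIV w"
begin

lemma borel_measurable_conv_weight: "w \<in> borel_measurable lborel"
  using w_cont by (simp add: borel_measurable_continuous_onI)

lemma set_integrable_exp_left: "set_integrable lborel {..y} (\<lambda>z. exp z * w z)"
  unfolding set_integrable_def
proof (rule Bochner_Integration.integrable_bound)
  show "integrable lborel (\<lambda>z. exp y * \<bar>w z\<bar>)"
    using w_int by (intro Bochner_Integration.integrable_mult_right integrable_abs)
  show "(\<lambda>z. indicator {..y} z *\<^sub>R (exp z * w z)) \<in> borel_measurable lborel"
    using borel_measurable_conv_weight by measurable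
  show "AE z in lborel. norm (indicator {..y} z *\<^sub>R (exp z * w z)) \<le> norm (exp y * \<bar>w z\<bar>)"
    by (auto simp: indicator_def abs_mult intro!: mult_right_mono)
qed

lemma set_integrable_exp_right: "set_integrable lborel {y<..} (\<lambda>z. exp (- z) * w z)"
  unfolding set_integrable_def
proof (rule Bochner_Integration.integrable_bound)
  show "integrable lborel (\<lambda>z. exp (- y) * \<bar>w z\<bar>)"
    using w_int by (intro Bochner_Integration.integrable_mult_right integrable_abs)
  show "(\<lambda>z. indicator {y<..} z *\<^sub>R (exp (- z) * w z)) \<in> borel_measurable lborel"
    using borel_measurable_conv_weight by measurable
  show "AE z in lborel. norm (indicator {y<..} z *\<^sub>R (exp (- z) * w z)) \<le> norm (exp (- y) * \<bar>w z\<bar>)"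
    by (auto simp: indicator_def abs_mult intro!: mult_right_mono)
qed

lemma exp_conv_right_eq_integral_open:
  "exp_conv_right w y = integral {y<..} (\<lambda>z. exp (- z) * w z)"
  unfolding exp_conv_right_def by (rule integral_spike_set[OF negligible_open_closed_ray_diff(2,1)])

lemma integrable_exp_left: "(\<lambda>z. exp z * w z) integrable_on {..y}"
  using set_borel_integral_eq_integral(1)[OF set_integrable_exp_left] .

lemma integrable_exp_right: "(\<lambda>z. exp (- z) * w z) integrable_on {y..}"
  using integrable_spike_set[OF set_borel_integral_eq_integral(1)[OF set_integrable_exp_right]
      negligible_open_closed_ray_diff] .

lemma continuous_on_exp_weights:
  "continuous_on S (\<lambda>z. exp z * w z)" "continuous_on S (\<lambda>z. exp (- z) * w z)"
  using w_cont by (auto intro!: continuous_intros intro: continuous_on_subset)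

lemma G_conv_eq:
  "(LINT z|lborel. G (y - z) * w z) = (exp (- y) * exp_conv_left w y + exp y * exp_conv_right w y) / 2"
proof -
  have split: "G (y - z) * w z = exp (- y) / 2 * (indicator {..y} z *\<^sub>R (exp z * w z))
       + exp y / 2 * (indicator {y<..} z *\<^sub>R (exp (- z) * w z))" for z
    by (auto simp: G_def indicator_def abs_if mult_exp_exp)
  have "(LINT z|lborel. G (y - z) * w z) = exp (- y) / 2 * (LINT z:{..y}|lborel. exp z * w z)
        + exp y / 2 * (LINT z:{y<..}|lborel. exp (- z) * w z)"
    unfolding split set_lebesgue_integral_def
    using set_integrable_exp_left set_integrable_exp_right
    by (simp add: set_integrable_def Bochner_Integration.integral_add)
  also have "(LINT z:{..y}|lborel. exp z * w z) = exp_conv_left w y"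
    unfolding exp_conv_left_def by (rule set_borel_integral_eq_integral(2)[OF set_integrable_exp_left])
  also have "(LINT z:{y<..}|lborel. exp (- z) * w z) = exp_conv_right w y"
    unfolding exp_conv_right_eq_integral_open
    by (rule set_borel_integral_eq_integral(2)[OF set_integrable_exp_right])
  finally show ?thesis by simp
qed

lemma has_real_derivative_exp_conv_left:
  "(exp_conv_left w has_real_derivative exp x * w x) (at x)"
proof -
  let ?f = "\<lambda>z. exp z * w z"
  have "at x within {x - 1..x + 1} = at x"
    by (rule at_within_interior) simp
  then have "((\<lambda>y. integral {x - 1..y} ?f) has_real_derivative ?f x) (at x)"
    using integral_has_real_derivative[of "x - 1" "x + 1" ?f x] continuous_on_exp_weights by simp
  from DERIV_add[OF DERIV_const[of "exp_conv_left w (x - 1)"] this]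
  have deriv: "((\<lambda>y. exp_conv_left w (x - 1) + integral {x - 1..y} ?f) has_real_derivative ?f x) (at x)"
    by simp
  have eq: "exp_conv_left w (x - 1) + integral {x - 1..y} ?f = exp_conv_left w y"
    if "y \<in> {x - 1<..<x + 1}" for y
  proof -
    have "{..y} = {..x - 1} \<union> {x - 1..y}" using that by auto
    moreover have "integral ({..x - 1} \<union> {x - 1..y}) ?f = integral {..x - 1} ?f + integral {x - 1..y} ?f"
      by (rule integral_Un[OF integrable_exp_left integrable_continuous_interval])
        (auto intro: continuous_on_exp_weights negligible_subset[OF negligible_sing[of "x - 1"]])
    ultimately show ?thesis unfolding exp_conv_left_def by simp
  qed
  show ?thesis
    by (rule has_field_derivative_transform_within_open[where S="{x - 1<..<x + 1}", OF deriv _ _ eq]) auto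
qed

lemma has_real_derivative_exp_conv_right:
  "(exp_conv_right w has_real_derivative - (exp (- x) * w x)) (at x)"
proof -
  let ?f = "\<lambda>z. exp (- z) * w z"
  have "at x within {x - 1..x + 1} = at x"
    by (rule at_within_interior) simp
  then have "((\<lambda>y. integral {y..x + 1} ?f) has_real_derivative - ?f x) (at x)"
    using integral_has_real_derivative'[of "x - 1" "x + 1" ?f x] continuous_on_exp_weights by simp
  from DERIV_add[OF this DERIV_const[of "exp_conv_right w (x + 1)"]]
  have deriv: "((\<lambda>y. integral {y..x + 1} ?f + exp_conv_right w (x + 1)) has_real_derivative - ?f x) (at x)"
    by simp
  have eq: "integral {y..x + 1} ?f + exp_conv_right w (x + 1) = exp_conv_right w y"
    if "y \<in> {x - 1<..<x + 1}" for y
  proof -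
    have "{y..} = {y..x + 1} \<union> {x + 1..}" using that by auto
    moreover have "integral ({y..x + 1} \<union> {x + 1..}) ?f = integral {y..x + 1} ?f + integral {x + 1..} ?f"
      by (rule integral_Un[OF integrable_continuous_interval integrable_exp_right])
        (auto intro: continuous_on_exp_weights negligible_subset[OF negligible_sing[of "x + 1"]])
    ultimately show ?thesis unfolding exp_conv_right_def by simp
  qed
  show ?thesis
    by (rule has_field_derivative_transform_within_open[where S="{x - 1<..<x + 1}", OF deriv _ _ eq]) auto
qed

lemma has_real_derivative_G_conv:
  "((\<lambda>y. LINT z|lborel. G (y - z) * w z) has_real_derivative G_conv_deriv w x) (at x)"
proof -
  have "((\<lambda>y. (exp (- y) * exp_conv_left w y + exp y * exp_conv_right w y) / 2)
      has_real_derivative G_conv_deriv w x) (at x)"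
    unfolding G_conv_deriv_def
    by (auto intro!: derivative_eq_intros has_real_derivative_exp_conv_left
        has_real_derivative_exp_conv_right simp: field_simps exp_minus)
  then show ?thesis by (simp add: G_conv_eq)
qed

lemma has_real_derivative_G_conv_deriv:
  "(G_conv_deriv w has_real_derivative (LINT z|lborel. G (x - z) * w z) - w x) (at x)"
proof -
  have "((\<lambda>y. (exp y * exp_conv_right w y - exp (- y) * exp_conv_left w y) / 2) has_real_derivative
      (exp (- x) * exp_conv_left w x + exp x * exp_conv_right w x) / 2 - w x) (at x)"
    by (auto intro!: derivative_eq_intros has_real_derivative_exp_conv_left
        has_real_derivative_exp_conv_right simp: field_simps exp_minus)
  then show ?thesis by (simp add: G_conv_eq G_conv_deriv_def[abs_def])
qed

end

abbreviation has_partials :: "(real \<times> real \<Rightarrow> real) \<Rightarrow> real \<Rightarrow> real \<Rightarrow> real \<times> real \<Rightarrow> bool" where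
  "has_partials f fx ft q \<equiv> (f has_derivative (\<lambda>h. fst h * fx + snd h * ft)) (at q)"

lemma has_partials_fst:
  assumes "(g has_real_derivative d) (at (fst q))"
  shows "has_partials (\<lambda>p. g (fst p)) d 0 q"
  using has_derivative_compose[OF has_derivative_fst[OF has_derivative_ident]
      assms[unfolded has_field_derivative_def]]
  by (simp add: mult.commute)

lemma has_partials_const: "has_partials (\<lambda>p. c) 0 0 q"
  by (rule has_derivative_eq_rhs[OF has_derivative_const]) auto

lemma has_partials_add:
  assumes "has_partials f fx ft q" "has_partials g gx gt q"
  shows "has_partials (\<lambda>p. f p + g p) (fx + gx) (ft + gt) q"
  using has_derivative_add[OF assms] by (rule has_derivative_eq_rhs) (auto simp: algebra_simps)

lemma has_partials_cmult:
  assumes "has_partials f fx ft q"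
  shows "has_partials (\<lambda>p. c * f p) (c * fx) (c * ft) q"
  using has_derivative_mult_right[OF assms] by (rule has_derivative_eq_rhs) (auto simp: algebra_simps)

lemma has_partials_mult:
  assumes "has_partials f fx ft q" "has_partials g gx gt q"
  shows "has_partials (\<lambda>p. f p * g p) (fx * g q + f q * gx) (ft * g q + f q * gt) q"
  using has_derivative_mult[OF assms] by (rule has_derivative_eq_rhs) (auto simp: algebra_simps)

lemma abs_increment_le_of_partial_increments:
  fixes F :: "real \<Rightarrow> real \<Rightarrow> real" and Ft :: "real \<Rightarrow> real"
  assumes time: "\<bar>F x s - F x t0 - Ft x * (s - t0)\<bar> \<le> \<epsilon> * \<bar>s - t0\<bar>"
    and coefficient: "\<bar>Ft x - Ft x0\<bar> \<le> \<epsilon>"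
    and space: "\<bar>F x t0 - F x0 t0 - (x - x0) * Fx\<bar> \<le> \<epsilon> * \<bar>x - x0\<bar>"
  shows "\<bar>F x s - F x0 t0 - ((x - x0) * Fx + (s - t0) * Ft x0)\<bar> \<le> 3 * \<epsilon> * norm (x - x0, s - t0)"
proof -
  define r where "r = norm (x - x0, s - t0)"
  have x_le: "\<bar>x - x0\<bar> \<le> r" and s_le: "\<bar>s - t0\<bar> \<le> r"
    using norm_fst_le[of "x - x0" "s - t0"] norm_snd_le[of "s - t0" "x - x0"] unfolding r_def by simp_all
  have \<epsilon>_mono: "\<epsilon> * a \<le> \<epsilon> * r" if "a \<le> r" for a
    using that coefficient by (intro mult_left_mono) auto
  have "\<bar>(Ft x - Ft x0) * (s - t0)\<bar> \<le> \<epsilon> * \<bar>s - t0\<bar>"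
    unfolding abs_mult using coefficient by (intro mult_right_mono) auto
  moreover have "F x s - F x0 t0 - ((x - x0) * Fx + (s - t0) * Ft x0)
      = (F x s - F x t0 - Ft x * (s - t0)) + (Ft x - Ft x0) * (s - t0) + (F x t0 - F x0 t0 - (x - x0) * Fx)"
    by (simp add: algebra_simps)
  ultimately show ?thesis
    using time space \<epsilon>_mono[OF s_le] \<epsilon>_mono[OF x_le] unfolding r_def[symmetric] by linarith
qed

lemma has_partials_of_uniform_time_derivative:
  fixes F :: "real \<Rightarrow> real \<Rightarrow> real" and Ft :: "real \<Rightarrow> real"
  assumes uniform: "\<And>e. e > 0 \<Longrightarrow>
      \<exists>d>0. \<forall>s x. \<bar>s - t0\<bar> < d \<longrightarrow> \<bar>F x s - F x t0 - Ft x * (s - t0)\<bar> \<le> e * \<bar>s - t0\<bar>"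
    and cont: "isCont Ft x0"
    and dx: "((\<lambda>x. F x t0) has_real_derivative Fx) (at x0)"
  shows "has_partials (\<lambda>p. F (fst p) (snd p)) Fx (Ft x0) (x0, t0)"
  unfolding has_derivative_at_alt
proof (intro conjI allI impI)
  show "bounded_linear (\<lambda>h::real \<times> real. fst h * Fx + snd h * Ft x0)"
    by (intro bounded_linear_add bounded_linear_compose[OF bounded_linear_mult_left]
        bounded_linear_fst bounded_linear_snd)
  fix e :: real
  assume e: "e > 0"
  obtain d1 where d1: "d1 > 0"
    "\<And>s x. \<bar>s - t0\<bar> < d1 \<Longrightarrow> \<bar>F x s - F x t0 - Ft x * (s - t0)\<bar> \<le> e/3 * \<bar>s - t0\<bar>"
    using uniform[of "e/3"] e by auto
  obtain d2 where d2: "d2 > 0" "\<And>x. \<bar>x - x0\<bar> < d2 \<Longrightarrow> \<bar>Ft x - Ft x0\<bar> < e/3"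
    using cont e unfolding continuous_at_eps_delta
    by (metis dist_real_def zero_less_divide_iff zero_less_numeral)
  have "((\<lambda>x. F x t0) has_derivative (\<lambda>h. h * Fx)) (at x0)"
    using dx by (simp add: has_field_derivative_def mult.commute[of _ Fx])
  then obtain d3 where d3: "d3 > 0"
    "\<And>x. \<bar>x - x0\<bar> < d3 \<Longrightarrow> \<bar>F x t0 - F x0 t0 - (x - x0) * Fx\<bar> \<le> e/3 * \<bar>x - x0\<bar>"
    unfolding has_derivative_at_alt using e by (metis real_norm_def zero_less_divide_iff zero_less_numeral)
  show "\<exists>d>0. \<forall>y. norm (y - (x0, t0)) < d \<longrightarrow>
      norm (F (fst y) (snd y) - F (fst (x0, t0)) (snd (x0, t0))
        - (fst (y - (x0, t0)) * Fx + snd (y - (x0, t0)) * Ft x0)) \<le> e * norm (y - (x0, t0))"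
  proof (intro exI[of _ "min d1 (min d2 d3)"] conjI allI impI)
    show "min d1 (min d2 d3) > 0" using d1 d2 d3 by auto
    fix y :: "real \<times> real"
    assume y: "norm (y - (x0, t0)) < min d1 (min d2 d3)"
    obtain x s where y_eq: "y = (x, s)" by (cases y)
    have "\<bar>x - x0\<bar> < d2" "\<bar>x - x0\<bar> < d3" "\<bar>s - t0\<bar> < d1"
      using y norm_fst_le[of "x - x0" "s - t0"] norm_snd_le[of "s - t0" "x - x0"] unfolding y_eq by auto
    then have "\<bar>F x s - F x0 t0 - ((x - x0) * Fx + (s - t0) * Ft x0)\<bar> \<le> 3 * (e/3) * norm (x - x0, s - t0)"
      using d1(2) d2(2) d3(2) by (intro abs_increment_le_of_partial_increments) (auto simp: less_imp_le)
    then show "norm (F (fst y) (snd y) - F (fst (x0, t0)) (snd (x0, t0))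
        - (fst (y - (x0, t0)) * Fx + snd (y - (x0, t0)) * Ft x0)) \<le> e * norm (y - (x0, t0))"
      unfolding y_eq by simp
  qed
qed

lemma open_time_strip: "open {p :: real \<times> real. 0 < snd p \<and> ereal (snd p) < T}"
  by (intro open_Collect_conj open_Collect_less continuous_intros)

locale dp_evolution =
  fixes u v :: "real \<Rightarrow> real \<Rightarrow> real" and T :: ereal and I :: "real set"
  assumes I_def: "I = {t. 0 \<le> t \<and> ereal t < T}"
    and sobolev_u: "\<And>t. t \<in> I \<Longrightarrow> sobolev 4 (\<lambda>x. u x t)"
    and sobolev_v: "\<And>t. t \<in> I \<Longrightarrow> sobolev 3 (\<lambda>x. v x t)"
    and difference_quotient:
      "\<And>t. t \<in> I \<Longrightarrow> ((\<lambda>s. hnorm 3 (\<lambda>x. (u x s - u x t) / (s - t) - v x t)) \<longlongrightarrow> 0) (at t within I)"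
    and dp_equation: "\<And>t x. t \<in> I \<Longrightarrow> v x t + u x t * deriv (\<lambda>y. u y t) x
      + 3/2 * deriv (\<lambda>y. LINT z|lborel. G (y - z) * (u z t)\<^sup>2) x = 0"

lemma dp_solution_imp_dp_evolution:
  assumes "dp_solution u0 T u"
  obtains v where "dp_evolution u v T {t. 0 \<le> t \<and> ereal t < T}"
proof -
  let ?I = "{t. 0 \<le> t \<and> ereal t < T}"
  obtain v where "\<forall>t\<in>?I. sobolev 4 (\<lambda>x. u x t)" "\<forall>t\<in>?I. sobolev 3 (\<lambda>x. v x t)"
    "\<forall>t\<in>?I. ((\<lambda>s. hnorm 3 (\<lambda>x. (u x s - u x t) / (s - t) - v x t)) \<longlongrightarrow> 0) (at t within ?I)"
    "\<forall>t\<in>?I. \<forall>x. v x t + u x t * deriv (\<lambda>y. u y t) x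
       + 3/2 * deriv (\<lambda>y. LINT z|lborel. G (y - z) * (u z t)\<^sup>2) x = 0"
    using assms unfolding dp_solution_def Let_def by blast
  then have "dp_evolution u v T ?I" unfolding dp_evolution_def by blast
  then show ?thesis by (rule that)
qed

context dp_evolution
begin

definition Du :: "real \<Rightarrow> nat \<Rightarrow> real \<Rightarrow> real" where
  "Du t = (SOME D. sob_derivs 4 (\<lambda>x. u x t) D)"

definition Dv :: "real \<Rightarrow> nat \<Rightarrow> real \<Rightarrow> real" where
  "Dv t = (SOME D. sob_derivs 3 (\<lambda>x. v x t) D)"

lemma sob_derivs_Du:
  assumes "t \<in> I"
  shows "sob_derivs 4 (\<lambda>x. u x t) (Du t)"
  using sobolev_u[OF assms] unfolding Du_def sobolev_def by (rule someI_ex)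

lemma sob_derivs_Dv:
  assumes "t \<in> I"
  shows "sob_derivs 3 (\<lambda>x. v x t) (Dv t)"
  using sobolev_v[OF assms] unfolding Dv_def sobolev_def by (rule someI_ex)

lemma Du_0: "t \<in> I \<Longrightarrow> Du t 0 = (\<lambda>x. u x t)"
  using sob_derivs_Du unfolding sob_derivs_def by auto

lemma Dv_0: "t \<in> I \<Longrightarrow> Dv t 0 = (\<lambda>x. v x t)"
  using sob_derivs_Dv unfolding sob_derivs_def by auto

lemma has_real_derivative_Du:
  "t \<in> I \<Longrightarrow> j < 3 \<Longrightarrow> (Du t j has_real_derivative Du t (Suc j) x) (at x)"
  using sob_derivs_Du unfolding sob_derivs_def by auto

lemma has_real_derivative_Dv:
  "t \<in> I \<Longrightarrow> j < 2 \<Longrightarrow> (Dv t j has_real_derivative Dv t (Suc j) x) (at x)"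
  using sob_derivs_Dv unfolding sob_derivs_def by auto

lemma isCont_Dv:
  assumes t: "t \<in> I" and j: "j < 3"
  shows "isCont (Dv t j) x"
proof (cases "j < 2")
  case True
  then show ?thesis by (rule DERIV_isCont[OF has_real_derivative_Dv[OF t]])
next
  case False
  with j have "j = 2" by simp
  have "isCont (Dv t 2) x"
    by (rule isCont_of_has_integral_increments[of "Dv t 3"])
      (use sob_derivs_has_integral[OF sob_derivs_Dv[OF t], of 2] in simp)
  with \<open>j = 2\<close> show ?thesis by simp
qed

lemma sob_derivs_difference_quotient:
  assumes s: "s \<in> I" and t: "t \<in> I"
  shows "sob_derivs 3 (\<lambda>x. (u x s - u x t) / (s - t) - v x t)
    (\<lambda>j x. (Du s j x - Du t j x) / (s - t) - Dv t j x)"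
proof -
  have Du_3: "sob_derivs 3 (\<lambda>x. u x r) (Du r)" if "r \<in> I" for r
    using sob_derivs_SucD[of 3 "\<lambda>x. u x r" "Du r"] sob_derivs_Du[OF that] by simp
  have "sob_derivs 3 (\<lambda>x. 1 * ((1 / (s - t)) * u x s + (- 1 / (s - t)) * u x t) + (- 1) * v x t)
      (\<lambda>j x. 1 * ((1 / (s - t)) * Du s j x + (- 1 / (s - t)) * Du t j x) + (- 1) * Dv t j x)"
    by (intro sob_derivs_lincomb Du_3 sob_derivs_Dv s t)
  then show ?thesis by (simp add: diff_divide_distrib)
qed

lemma abs_difference_quotient_le:
  assumes s: "s \<in> I" and t: "t \<in> I" and j: "j < 3" and e: "e > 0"
    and small: "\<bar>hnorm 3 (\<lambda>x. (u x s - u x t) / (s - t) - v x t)\<bar> < e/2"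
  shows "\<bar>(Du s j x - Du t j x) / (s - t) - Dv t j x\<bar> \<le> e"
proof -
  define g where "g = (\<lambda>x. (u x s - u x t) / (s - t) - v x t)"
  from power_strict_mono[OF small[folded g_def] abs_ge_zero, of 2] have "(hnorm 3 g)\<^sup>2 < (e/2)\<^sup>2"
    by simp
  then have "(hnorm 3 g)\<^sup>2 / (2 * (e/2)) < (e/2)\<^sup>2 / e"
    using e by (simp add: divide_strict_right_mono)
  also have "(e/2)\<^sup>2 / e = e/4"
    using e by (simp add: power2_eq_square)
  finally have "(hnorm 3 g)\<^sup>2 / (2 * (e/2)) < e/2"
    using e by linarith
  moreover have "\<bar>(Du s j x - Du t j x) / (s - t) - Dv t j x\<bar> \<le> e/2 + (hnorm 3 g)\<^sup>2 / (2 * (e/2))"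
    unfolding g_def using j e
    by (intro sob_derivs_abs_le_hnorm sob_derivs_difference_quotient s t) auto
  ultimately show ?thesis by linarith
qed

lemma Du_uniform_time_derivative:
  assumes t: "t \<in> I" "t > 0" and j: "j < 3" and e: "e > 0"
  shows "\<exists>d>0. \<forall>s x. \<bar>s - t\<bar> < d \<longrightarrow> \<bar>Du s j x - Du t j x - Dv t j x * (s - t)\<bar> \<le> e * \<bar>s - t\<bar>"
proof -
  have "eventually (\<lambda>s. dist (hnorm 3 (\<lambda>x. (u x s - u x t) / (s - t) - v x t)) 0 < e/2) (at t within I)"
    using difference_quotient[OF t(1)] e unfolding tendsto_iff by (meson half_gt_zero)
  then obtain d1 where d1: "d1 > 0" "\<And>s. s \<in> I \<Longrightarrow> s \<noteq> t \<Longrightarrow> dist s t < d1 \<Longrightarrow>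
      \<bar>hnorm 3 (\<lambda>x. (u x s - u x t) / (s - t) - v x t)\<bar> < e/2"
    unfolding eventually_at by auto
  obtain r where r: "t < r" "ereal r < T"
    using t ereal_dense2 unfolding I_def by force
  show ?thesis
  proof (intro exI[of _ "min d1 (min t (r - t))"] conjI allI impI)
    show "min d1 (min t (r - t)) > 0" using d1 t r by auto
    fix s x
    assume s: "\<bar>s - t\<bar> < min d1 (min t (r - t))"
    show "\<bar>Du s j x - Du t j x - Dv t j x * (s - t)\<bar> \<le> e * \<bar>s - t\<bar>"
    proof (cases "s = t")
      case False
      have s_I: "s \<in> I"
        unfolding I_def using s r
        by (auto simp: abs_less_iff) (meson ereal_less_eq(3) less_imp_le order_le_less_trans)
      have "\<bar>(Du s j x - Du t j x) / (s - t) - Dv t j x\<bar> \<le> e"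
        using d1(2)[OF s_I False] s by (intro abs_difference_quotient_le s_I t(1) j e) (simp add: dist_real_def)
      then have "\<bar>(Du s j x - Du t j x) / (s - t) - Dv t j x\<bar> * \<bar>s - t\<bar> \<le> e * \<bar>s - t\<bar>"
        by (rule mult_right_mono) simp
      moreover have "((Du s j x - Du t j x) / (s - t) - Dv t j x) * (s - t)
          = Du s j x - Du t j x - Dv t j x * (s - t)"
        using False by (simp add: field_simps)
      ultimately show ?thesis by (metis abs_mult)
    qed simp
  qed
qed

lemma has_partials_Du:
  assumes "t \<in> I" "t > 0" "j < 3"
  shows "has_partials (\<lambda>p. Du (snd p) j (fst p)) (Du t (Suc j) x) (Dv t j x) (x, t)"
  using assms
  by (intro has_partials_of_uniform_time_derivative Du_uniform_time_derivative isCont_Dv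
      has_real_derivative_Du)

abbreviation Pu :: "real \<Rightarrow> real \<Rightarrow> real" where
  "Pu t y \<equiv> LINT z|lborel. G (y - z) * (u z t)\<^sup>2"

abbreviation Pu_x :: "real \<Rightarrow> real \<Rightarrow> real" where
  "Pu_x t \<equiv> G_conv_deriv (\<lambda>z. (u z t)\<^sup>2)"

lemma has_real_derivative_u:
  "t \<in> I \<Longrightarrow> ((\<lambda>x. u x t) has_real_derivative Du t 1 x) (at x)"
  using has_real_derivative_Du[of t 0 x] Du_0[of t] by simp

lemma has_real_derivative_Du_1: "t \<in> I \<Longrightarrow> (Du t 1 has_real_derivative Du t 2 x) (at x)"
  using has_real_derivative_Du[of t 1 x] by (simp add: numeral_2_eq_2)

lemma has_real_derivative_Du_2: "t \<in> I \<Longrightarrow> (Du t 2 has_real_derivative Du t 3 x) (at x)"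
  using has_real_derivative_Du[of t 2 x] by (simp add: numeral_3_eq_3)

lemma u_squared_conv_weight:
  assumes t: "t \<in> I"
  shows "integrable lborel (\<lambda>z. (u z t)\<^sup>2)" "continuous_on UNIV (\<lambda>z. (u z t)\<^sup>2)"
proof -
  show "integrable lborel (\<lambda>z. (u z t)\<^sup>2)"
    using sob_derivs_Du[OF t] Du_0[OF t] unfolding sob_derivs_def by auto
  have "isCont (\<lambda>z. u z t) x" for x
    using DERIV_isCont[OF has_real_derivative_u[OF t]] .
  then show "continuous_on UNIV (\<lambda>z. (u z t)\<^sup>2)"
    by (intro continuous_at_imp_continuous_on ballI continuous_intros) auto
qed

lemma has_real_derivative_Pu: "t \<in> I \<Longrightarrow> (Pu t has_real_derivative Pu_x t x) (at x)"
  using has_real_derivative_G_conv[OF u_squared_conv_weight] .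

lemma has_real_derivative_Pu_x: "t \<in> I \<Longrightarrow> (Pu_x t has_real_derivative Pu t x - (u x t)\<^sup>2) (at x)"
  using has_real_derivative_G_conv_deriv[OF u_squared_conv_weight] .

lemma deriv_u: "t \<in> I \<Longrightarrow> deriv (\<lambda>y. u y t) = Du t 1"
  using has_real_derivative_u by (auto intro!: ext DERIV_imp_deriv)

lemma v_eq: "t \<in> I \<Longrightarrow> v x t = - (Du t 0 x * Du t 1 x) - 3/2 * Pu_x t x"
  using dp_equation[of t x] deriv_u[of t] DERIV_imp_deriv[OF has_real_derivative_Pu[of t x]] Du_0[of t]
  by (auto simp: algebra_simps)

lemma Dv_1_eq:
  assumes t: "t \<in> I"
  shows "Dv t 1 x = - (Du t 1 x * Du t 1 x + Du t 2 x * Du t 0 x) - 3/2 * (Pu t x - (u x t)\<^sup>2)"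
proof -
  have "Dv t 0 = (\<lambda>x. - (Du t 0 x * Du t 1 x) - 3/2 * Pu_x t x)"
    using Dv_0[OF t] v_eq[OF t] by auto
  moreover have "((\<lambda>x. - (Du t 0 x * Du t 1 x) - 3/2 * Pu_x t x) has_real_derivative
      - (Du t 1 x * Du t 1 x + Du t 2 x * Du t 0 x) - 3/2 * (Pu t x - (u x t)\<^sup>2)) (at x)"
    using has_real_derivative_Du[OF t, of 0 x] has_real_derivative_Du_1[OF t]
      has_real_derivative_Pu_x[OF t]
    by (intro DERIV_diff DERIV_minus DERIV_mult DERIV_cmult) simp_all
  ultimately show ?thesis
    using has_real_derivative_Dv[OF t, of 0 x] by (auto intro: DERIV_unique)
qed

lemma Dv_2_eq:
  assumes t: "t \<in> I"
  shows "Dv t 2 x = - (3 * Du t 1 x * Du t 2 x + Du t 0 x * Du t 3 x)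
    - 3/2 * (Pu_x t x - 2 * Du t 0 x * Du t 1 x)"
proof -
  have "Dv t 1 = (\<lambda>x. - (Du t 1 x * Du t 1 x + Du t 2 x * Du t 0 x) - 3/2 * (Pu t x - (u x t)\<^sup>2))"
    using Dv_1_eq[OF t] by auto
  moreover have "(Dv t 1 has_real_derivative Dv t 2 x) (at x)"
    using has_real_derivative_Dv[OF t, of 1 x] by (simp add: numeral_2_eq_2)
  ultimately have "((\<lambda>x. - (Du t 1 x * Du t 1 x + Du t 2 x * Du t 0 x) - 3/2 * (Pu t x - (u x t)\<^sup>2))
      has_real_derivative Dv t 2 x) (at x)"
    by simp
  from DERIV_unique[OF this DERIV_diff[OF DERIV_minus[OF DERIV_add[OF
      DERIV_mult[OF has_real_derivative_Du_1[OF t] has_real_derivative_Du_1[OF t]]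
      DERIV_mult[OF has_real_derivative_Du_2[OF t] has_real_derivative_Du[OF t, of 0]]]]
      DERIV_cmult[OF DERIV_diff[OF has_real_derivative_Pu[OF t]
      DERIV_power[OF has_real_derivative_u[OF t], of 2]]]]]
  show ?thesis using Du_0[OF t] by (simp add: algebra_simps)
qed

lemma ux_eq: "t \<in> I \<Longrightarrow> ux u (x, t) = Du t 1 x"
  unfolding ux_def using deriv_u by simp

lemma uxx_eq: "t \<in> I \<Longrightarrow> uxx u (x, t) = Du t 2 x"
  unfolding uxx_def using deriv_u DERIV_imp_deriv[OF has_real_derivative_Du_1] by simp

lemma mm_eq: "t \<in> I \<Longrightarrow> mm u (x, t) = Du t 0 x - Du t 2 x"
  unfolding mm_def using uxx_eq Du_0 by simp

lemma FF_eq: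
  "t \<in> I \<Longrightarrow> FF u (x, t) = Du t 1 x * Du t 1 x - 2 * Du t 0 x * Du t 1 x + Du t 0 x * Du t 2 x"
  unfolding FF_def using uxx_eq ux_eq Du_0 by (simp add: power2_eq_square)

lemma time_strip_subset: "p \<in> {p. 0 < snd p \<and> ereal (snd p) < T} \<Longrightarrow> snd p \<in> I"
  unfolding I_def by auto

lemma has_partials_Du_0_1_2:
  assumes "t \<in> I" "t > 0"
  shows "has_partials (\<lambda>p. Du (snd p) 0 (fst p)) (Du t 1 x) (Dv t 0 x) (x, t)"
    and "has_partials (\<lambda>p. Du (snd p) 1 (fst p)) (Du t 2 x) (Dv t 1 x) (x, t)"
    and "has_partials (\<lambda>p. Du (snd p) 2 (fst p)) (Du t 3 x) (Dv t 2 x) (x, t)"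
  using has_partials_Du[OF assms, of 0] has_partials_Du[OF assms, of 1] has_partials_Du[OF assms, of 2]
  by (simp_all add: numeral_eq_Suc)

lemma has_partials_mm:
  assumes t: "t \<in> I" "t > 0"
  shows "has_partials (mm u) (Du t 1 x - Du t 3 x) (Dv t 0 x - Dv t 2 x) (x, t)"
proof (rule has_derivative_transform_within_open[OF _ open_time_strip])
  show "has_partials (\<lambda>p. Du (snd p) 0 (fst p) - Du (snd p) 2 (fst p))
      (Du t 1 x - Du t 3 x) (Dv t 0 x - Dv t 2 x) (x, t)"
    using has_derivative_diff[OF has_partials_Du_0_1_2(1,3)[OF t]]
    by (rule has_derivative_eq_rhs) (auto simp: algebra_simps)
  show "Du (snd q) 0 (fst q) - Du (snd q) 2 (fst q) = mm u q"
    if "q \<in> {p. 0 < snd p \<and> ereal (snd p) < T}" for q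
    using mm_eq[OF time_strip_subset[OF that]] by (metis prod.collapse)
qed (use t in \<open>auto simp: I_def\<close>)

lemma has_partials_FF:
  assumes t: "t \<in> I" "t > 0"
  shows "has_partials (FF u)
    (3 * Du t 1 x * Du t 2 x - 2 * Du t 1 x * Du t 1 x - 2 * Du t 0 x * Du t 2 x + Du t 0 x * Du t 3 x)
    (2 * Du t 1 x * Dv t 1 x - 2 * (Dv t 0 x * Du t 1 x + Du t 0 x * Dv t 1 x)
      + (Dv t 0 x * Du t 2 x + Du t 0 x * Dv t 2 x)) (x, t)"
proof (rule has_derivative_transform_within_open[OF _ open_time_strip])
  note D = has_partials_Du_0_1_2[OF t]
  show "has_partials (\<lambda>p. Du (snd p) 1 (fst p) * Du (snd p) 1 (fst p)
      - 2 * Du (snd p) 0 (fst p) * Du (snd p) 1 (fst p) + Du (snd p) 0 (fst p) * Du (snd p) 2 (fst p))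
    (3 * Du t 1 x * Du t 2 x - 2 * Du t 1 x * Du t 1 x - 2 * Du t 0 x * Du t 2 x + Du t 0 x * Du t 3 x)
    (2 * Du t 1 x * Dv t 1 x - 2 * (Dv t 0 x * Du t 1 x + Du t 0 x * Dv t 1 x)
      + (Dv t 0 x * Du t 2 x + Du t 0 x * Dv t 2 x)) (x, t)"
    using has_derivative_add[OF has_derivative_diff[OF has_derivative_mult[OF D(2) D(2)]
        has_derivative_mult[OF has_derivative_mult_right[OF D(1)] D(2)]] has_derivative_mult[OF D(1) D(3)]]
    by (rule has_derivative_eq_rhs) (auto simp: algebra_simps)
  show "Du (snd q) 1 (fst q) * Du (snd q) 1 (fst q) - 2 * Du (snd q) 0 (fst q) * Du (snd q) 1 (fst q)
      + Du (snd q) 0 (fst q) * Du (snd q) 2 (fst q) = FF u q"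
    if "q \<in> {p. 0 < snd p \<and> ereal (snd p) < T}" for q
    using FF_eq[OF time_strip_subset[OF that]] by (metis prod.collapse)
qed (use t in \<open>auto simp: I_def\<close>)

lemma m_F_structure:
  assumes t: "t \<in> I" "t > 0"
  shows "\<exists>Mx Mt Fx Ft. has_partials (mm u) Mx Mt (x, t) \<and> has_partials (FF u) Fx Ft (x, t)
    \<and> Fx - Mt = -2 * FF u (x, t)"
proof (intro exI conjI)
  show "has_partials (mm u) (Du t 1 x - Du t 3 x) (Dv t 0 x - Dv t 2 x) (x, t)"
    by (rule has_partials_mm[OF t])
  show "has_partials (FF u)
    (3 * Du t 1 x * Du t 2 x - 2 * Du t 1 x * Du t 1 x - 2 * Du t 0 x * Du t 2 x + Du t 0 x * Du t 3 x)
    (2 * Du t 1 x * Dv t 1 x - 2 * (Dv t 0 x * Du t 1 x + Du t 0 x * Dv t 1 x)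
      + (Dv t 0 x * Du t 2 x + Du t 0 x * Dv t 2 x)) (x, t)"
    by (rule has_partials_FF[OF t])
  show "3 * Du t 1 x * Du t 2 x - 2 * Du t 1 x * Du t 1 x - 2 * Du t 0 x * Du t 2 x + Du t 0 x * Du t 3 x
      - (Dv t 0 x - Dv t 2 x) = -2 * FF u (x, t)"
    unfolding FF_eq[OF t(1)] Dv_0[OF t(1)] Dv_2_eq[OF t(1)] v_eq[OF t(1)]
    by (simp add: algebra_simps)
qed

end

lemma dp_solution_m_F_structure:
  assumes "dp_solution u0 T u" and "0 < snd q" and "ereal (snd q) < T"
  shows "\<exists>Mx Mt Fx Ft. has_partials (mm u) Mx Mt q \<and> has_partials (FF u) Fx Ft q
    \<and> Fx - Mt = -2 * FF u q"
proof -
  obtain v where "dp_evolution u v T {t. 0 \<le> t \<and> ereal t < T}"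
    using dp_solution_imp_dp_evolution[OF assms(1)] .
  from dp_evolution.m_F_structure[OF this, of "snd q" "fst q"] assms(2,3) show ?thesis by simp
qed

definition ext_deriv_at :: "form1 \<Rightarrow> real \<Rightarrow> real \<times> real \<Rightarrow> bool" where
  "ext_deriv_at \<omega> r q \<longleftrightarrow> (\<exists>f' g'. (fst \<omega> has_derivative f') (at q) \<and> (snd \<omega> has_derivative g') (at q)
     \<and> r = g' (1, 0) - f' (0, 1))"

lemma ext_deriv_on_iff: "ext_deriv_on V \<omega> h \<longleftrightarrow> (\<forall>q\<in>V. ext_deriv_at \<omega> (h q) q)"
  unfolding ext_deriv_on_def ext_deriv_at_def ..

lemma ext_deriv_atI:
  assumes "has_partials f fx ft q" "has_partials g gx gt q" "r = gx - ft"
  shows "ext_deriv_at (f, g) r q"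
  using assms unfolding ext_deriv_at_def by force

definition structure_equations_on ::
  "(real \<times> real) set \<Rightarrow> form1 \<Rightarrow> form1 \<Rightarrow> form1 \<Rightarrow> form1 \<Rightarrow> form1 \<Rightarrow> bool" where
  "structure_equations_on V \<omega>1 \<omega>2 \<omega>12 \<omega>13 \<omega>23 \<longleftrightarrow>
     ext_deriv_on V \<omega>1 (wedge \<omega>12 \<omega>2) \<and> ext_deriv_on V \<omega>2 (wedge \<omega>1 \<omega>12) \<and>
     (\<forall>q\<in>V. wedge \<omega>1 \<omega>13 q + wedge \<omega>2 \<omega>23 q = 0) \<and>
     ext_deriv_on V \<omega>12 (\<lambda>q. - wedge \<omega>13 \<omega>23 q) \<and>
     ext_deriv_on V \<omega>13 (wedge \<omega>12 \<omega>23) \<and> ext_deriv_on V \<omega>23 (\<lambda>q. - wedge \<omega>12 \<omega>13 q)"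

lemma structure_equations_onI:
  assumes "\<And>q. q \<in> V \<Longrightarrow>
    ext_deriv_at \<omega>1 (wedge \<omega>12 \<omega>2 q) q \<and> ext_deriv_at \<omega>2 (wedge \<omega>1 \<omega>12 q) q \<and>
    wedge \<omega>1 \<omega>13 q + wedge \<omega>2 \<omega>23 q = 0 \<and> ext_deriv_at \<omega>12 (- wedge \<omega>13 \<omega>23 q) q \<and>
    ext_deriv_at \<omega>13 (wedge \<omega>12 \<omega>23 q) q \<and> ext_deriv_at \<omega>23 (- wedge \<omega>12 \<omega>13 q) q"
  shows "structure_equations_on V \<omega>1 \<omega>2 \<omega>12 \<omega>13 \<omega>23"
  using assms unfolding structure_equations_on_def ext_deriv_on_iff by blast

lemma dp_structure_equations_at:
  fixes u :: "real \<Rightarrow> real \<Rightarrow> real" and a b c :: "real \<times> real \<Rightarrow> real"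
  assumes m: "has_partials (mm u) Mx Mt q" and F: "has_partials (FF u) Fx Ft q"
    and dp: "Fx - Mt = -2 * FF u q"
    and a: "has_partials a ax 0 q" and b: "has_partials b bx 0 q" and c: "has_partials c cx 0 q"
    and ode1: "ax + \<mu> * bx = 2 * a q + 4 * \<mu> * b q - 2 * c q"
    and ode2: "bx + \<mu> * cx = -2 * \<mu> * a q + 4 * b q + 2 * \<mu> * c q"
    and gauss: "a q * c q - (b q)\<^sup>2 = -1"
    and sign: "\<sigma> = 1 \<or> \<sigma> = -1"
  defines "\<omega>1 \<equiv> om1 u" and "\<omega>2 \<equiv> om2 u \<mu> \<sigma>" and "\<omega>12 \<equiv> om3 u \<mu> \<sigma>"
    and "\<omega>13 \<equiv> form_add (form_scale a (om1 u)) (form_scale b (om2 u \<mu> \<sigma>))"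
    and "\<omega>23 \<equiv> form_add (form_scale b (om1 u)) (form_scale c (om2 u \<mu> \<sigma>))"
  shows "ext_deriv_at \<omega>1 (wedge \<omega>12 \<omega>2 q) q \<and> ext_deriv_at \<omega>2 (wedge \<omega>1 \<omega>12 q) q \<and>
    wedge \<omega>1 \<omega>13 q + wedge \<omega>2 \<omega>23 q = 0 \<and> ext_deriv_at \<omega>12 (- wedge \<omega>13 \<omega>23 q) q \<and>
    ext_deriv_at \<omega>13 (wedge \<omega>12 \<omega>23 q) q \<and> ext_deriv_at \<omega>23 (- wedge \<omega>12 \<omega>13 q) q"
proof (intro conjI)
  define s where "s = sqrt (1 + \<mu>\<^sup>2)"
  have s2: "s * s = 1 + \<mu>\<^sup>2" unfolding s_def by (simp add: add_pos_nonneg)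
  have \<sigma>2: "\<sigma> * \<sigma> = 1" using sign by auto
  have forms: "\<omega>1 = (mm u, FF u)"
    "\<omega>2 = (\<lambda>p. \<mu> * mm u p + \<sigma> * 2 * s, \<lambda>p. \<mu> * FF u p)"
    "\<omega>12 = (\<lambda>p. \<sigma> * s * mm u p + 2 * \<mu>, \<lambda>p. \<sigma> * s * FF u p)"
    "\<omega>13 = (\<lambda>p. a p * mm u p + b p * (\<mu> * mm u p + \<sigma> * 2 * s), \<lambda>p. a p * FF u p + b p * (\<mu> * FF u p))"
    "\<omega>23 = (\<lambda>p. b p * mm u p + c p * (\<mu> * mm u p + \<sigma> * 2 * s), \<lambda>p. b p * FF u p + c p * (\<mu> * FF u p))"
    unfolding \<omega>1_def \<omega>2_def \<omega>12_def \<omega>13_def \<omega>23_def om1_def om2_def om3_def form_add_def form_scale_def s_def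
    by simp_all
  have m2: "has_partials (\<lambda>p. \<mu> * mm u p + \<sigma> * 2 * s) (\<mu> * Mx + 0) (\<mu> * Mt + 0) q"
    by (intro has_partials_add has_partials_cmult has_partials_const m)
  have F2: "has_partials (\<lambda>p. \<mu> * FF u p) (\<mu> * Fx) (\<mu> * Ft) q"
    by (intro has_partials_cmult F)
  have w: "wedge \<omega> \<eta> q = fst \<omega> q * snd \<eta> q - snd \<omega> q * fst \<eta> q" for \<omega> \<eta>
    unfolding wedge_def ..
  show "ext_deriv_at \<omega>1 (wedge \<omega>12 \<omega>2 q) q"
    unfolding forms(1) by (rule ext_deriv_atI[OF m F]) (use dp s2 \<sigma>2 in \<open>simp add: w forms; algebra\<close>)
  show "ext_deriv_at \<omega>2 (wedge \<omega>1 \<omega>12 q) q"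
    unfolding forms(2) by (rule ext_deriv_atI[OF m2 F2]) (use dp in \<open>simp add: w forms; algebra\<close>)
  show "wedge \<omega>1 \<omega>13 q + wedge \<omega>2 \<omega>23 q = 0"
    by (simp add: w forms algebra_simps)
  show "ext_deriv_at \<omega>12 (- wedge \<omega>13 \<omega>23 q) q"
    unfolding forms(3)
    by (rule ext_deriv_atI[OF has_partials_add[OF has_partials_cmult[OF m] has_partials_const]
          has_partials_cmult[OF F]])
      (use dp s2 \<sigma>2 gauss in \<open>simp add: w forms; algebra\<close>)
  show "ext_deriv_at \<omega>13 (wedge \<omega>12 \<omega>23 q) q"
    unfolding forms(4)
    by (rule ext_deriv_atI[OF has_partials_add[OF has_partials_mult[OF a m] has_partials_mult[OF b m2]]
          has_partials_add[OF has_partials_mult[OF a F] has_partials_mult[OF b F2]]])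
      (use dp s2 \<sigma>2 ode1 in \<open>simp add: w forms; algebra\<close>)
  show "ext_deriv_at \<omega>23 (- wedge \<omega>12 \<omega>13 q) q"
    unfolding forms(5)
    by (rule ext_deriv_atI[OF has_partials_add[OF has_partials_mult[OF b m] has_partials_mult[OF c m2]]
          has_partials_add[OF has_partials_mult[OF b F] has_partials_mult[OF c F2]]])
      (use dp s2 \<sigma>2 ode2 in \<open>simp add: w forms; algebra\<close>)
qed

lemma smooth_on_fst_of_deriv_closed:
  fixes A :: "(real \<Rightarrow> real) set"
  assumes closed: "\<And>f. f \<in> A \<Longrightarrow> \<exists>f'\<in>A. \<forall>x>x0. (f has_real_derivative f' x) (at x)"
    and f: "f \<in> A" and V: "\<And>q. q \<in> V \<Longrightarrow> x0 < fst q"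
  shows "smooth_on V (\<lambda>q. f (fst q))"
proof -
  obtain d where d: "\<And>f. f \<in> A \<Longrightarrow> d f \<in> A \<and> (\<forall>x>x0. (f has_real_derivative d f x) (at x))"
    using closed by metis
  have iter: "(d ^^ n) f \<in> A" for n
    by (induction n) (auto simp: f d)
  let ?D = "\<lambda>js. if \<forall>b\<in>set js. b then (\<lambda>q. (d ^^ length js) f (fst q)) else (\<lambda>q. 0)"
  have "has_partials (?D js) (?D (True # js) p) (?D (False # js) p) p" if "p \<in> V" for js p
  proof (cases "\<forall>b\<in>set js. b")
    case True
    have "((d ^^ length js) f has_real_derivative (d ^^ Suc (length js)) f (fst p)) (at (fst p))"
      using d[OF iter] V[OF that] by simp
    from has_partials_fst[OF this] True show ?thesis by auto
  next
    case False
    then have "\<not> (\<forall>b\<in>set (True # js). b)" "\<not> (\<forall>b\<in>set (False # js). b)" by auto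
    with False show ?thesis by (simp only: if_not_P if_False has_partials_const)
  qed
  then show ?thesis unfolding smooth_on_def by (intro exI[of _ ?D]) simp
qed

definition zeta :: "real \<Rightarrow> real \<Rightarrow> real" where
  "zeta x0 x = sqrt (exp (4 * (x - x0)) - 1)"

lemma zeta_pos: "x0 < x \<Longrightarrow> 0 < zeta x0 x"
  unfolding zeta_def by simp

lemma has_real_derivative_zeta:
  assumes x: "x0 < x"
  shows "(zeta x0 has_real_derivative 2 * zeta x0 x + 2 * inverse (zeta x0 x)) (at x)"
proof -
  have pos: "exp (4 * (x - x0)) - 1 > 0" using x by simp
  have "(zeta x0 has_real_derivative inverse (zeta x0 x) / 2 * (exp (4 * (x - x0)) * 4)) (at x)"
    unfolding zeta_def
    by (rule DERIV_real_sqrt[THEN DERIV_chain2]) (use pos in \<open>auto intro!: derivative_eq_intros\<close>)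
  moreover have "exp (4 * (x - x0)) = zeta x0 x * zeta x0 x + 1"
    using pos unfolding zeta_def by simp
  ultimately show ?thesis
    using zeta_pos[OF x] by (elim DERIV_cong) (simp add: field_simps)
qed

lemma has_real_derivative_inverse_zeta:
  assumes x: "x0 < x"
  shows "((\<lambda>x. inverse (zeta x0 x)) has_real_derivative
    - 2 * (inverse (zeta x0 x) + inverse (zeta x0 x) ^ 3)) (at x)"
proof -
  have "zeta x0 x \<noteq> 0" using zeta_pos[OF x] by simp
  from DERIV_inverse_fun[OF has_real_derivative_zeta[OF x] this] show ?thesis
    by (rule DERIV_cong) (use \<open>zeta x0 x \<noteq> 0\<close> in \<open>simp add: field_simps power_inverse power3_eq_cube\<close>)
qed

inductive_set zeta_algebra :: "real \<Rightarrow> (real \<Rightarrow> real) set" for x0 :: real where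
  const: "(\<lambda>x. c) \<in> zeta_algebra x0"
| zeta: "zeta x0 \<in> zeta_algebra x0"
| inverse_zeta: "(\<lambda>x. inverse (zeta x0 x)) \<in> zeta_algebra x0"
| add: "f \<in> zeta_algebra x0 \<Longrightarrow> g \<in> zeta_algebra x0 \<Longrightarrow> (\<lambda>x. f x + g x) \<in> zeta_algebra x0"
| mult: "f \<in> zeta_algebra x0 \<Longrightarrow> g \<in> zeta_algebra x0 \<Longrightarrow> (\<lambda>x. f x * g x) \<in> zeta_algebra x0"

lemma zeta_algebra_lincomb: "(\<lambda>x. \<alpha> * zeta x0 x + \<beta> * inverse (zeta x0 x)) \<in> zeta_algebra x0"
  by (intro zeta_algebra.intros)

lemma zeta_algebra_power: "f \<in> zeta_algebra x0 \<Longrightarrow> (\<lambda>x. f x ^ n) \<in> zeta_algebra x0"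
  by (induction n) (auto intro: zeta_algebra.intros)

lemma zeta_algebra_deriv_closed:
  "f \<in> zeta_algebra x0 \<Longrightarrow> \<exists>f'\<in>zeta_algebra x0. \<forall>x>x0. (f has_real_derivative f' x) (at x)"
proof (induction rule: zeta_algebra.induct)
  case (const c)
  show ?case by (intro bexI[of _ "\<lambda>x. 0"] zeta_algebra.intros) auto
next
  case zeta
  show ?case
    using has_real_derivative_zeta
    by (intro bexI[of _ "\<lambda>x. 2 * zeta x0 x + 2 * inverse (zeta x0 x)"] zeta_algebra_lincomb) auto
next
  case inverse_zeta
  show ?case
    using has_real_derivative_inverse_zeta
    by (intro bexI[of _ "\<lambda>x. - 2 * (inverse (zeta x0 x) + inverse (zeta x0 x) ^ 3)"]
        zeta_algebra.intros zeta_algebra_power) auto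
next
  case (add f g)
  then obtain f' g' where "f' \<in> zeta_algebra x0" "g' \<in> zeta_algebra x0"
    "\<forall>x>x0. (f has_real_derivative f' x) (at x)" "\<forall>x>x0. (g has_real_derivative g' x) (at x)"
    by blast
  then show ?case
    by (intro bexI[of _ "\<lambda>x. f' x + g' x"]) (auto intro: zeta_algebra.add DERIV_add)
next
  case (mult f g)
  then obtain f' g' where "f' \<in> zeta_algebra x0" "g' \<in> zeta_algebra x0"
    "\<forall>x>x0. (f has_real_derivative f' x) (at x)" "\<forall>x>x0. (g has_real_derivative g' x) (at x)"
    by blast
  with mult.hyps show ?case
    by (intro bexI[of _ "\<lambda>x. f' x * g x + g' x * f x"]) (auto intro: zeta_algebra.intros DERIV_mult)
qed

definition zeta_lincomb :: "real \<Rightarrow> real \<Rightarrow> real \<Rightarrow> real \<Rightarrow> real" where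
  "zeta_lincomb \<alpha> \<beta> x0 x = \<alpha> * zeta x0 x + \<beta> * inverse (zeta x0 x)"

lemma has_real_derivative_zeta_lincomb:
  "x0 < x \<Longrightarrow> (zeta_lincomb \<alpha> \<beta> x0 has_real_derivative
    \<alpha> * (2 * zeta x0 x + 2 * inverse (zeta x0 x)) + \<beta> * (- 2 * (inverse (zeta x0 x) + inverse (zeta x0 x) ^ 3))) (at x)"
  unfolding zeta_lincomb_def[abs_def]
  by (intro DERIV_add DERIV_cmult has_real_derivative_zeta has_real_derivative_inverse_zeta)

lemma smooth_on_zeta_lincomb:
  assumes "\<And>q. q \<in> V \<Longrightarrow> x0 < fst q"
  shows "smooth_on V (\<lambda>q. zeta_lincomb \<alpha> \<beta> x0 (fst q))"
  unfolding zeta_lincomb_def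
  using smooth_on_fst_of_deriv_closed[OF zeta_algebra_deriv_closed zeta_algebra_lincomb assms] .

text \<open>The coefficients \<open>a, b, c\<close> of the second fundamental form are sought with \<open>a + \<mu> b = \<zeta>\<close>,
  \<open>b + \<mu> c = \<mu> \<zeta>\<close> and \<open>a c - b\<^sup>2 = - \<zeta> \<zeta>\<^sup>-\<^sup>1\<close>; this reduces both Codazzi equations to
  \<open>\<zeta>' = 2 (\<zeta> + \<zeta>\<^sup>-\<^sup>1)\<close>, which \<open>zeta x0\<close> solves on \<open>x > x0\<close>.\<close>
definition sff_a :: "real \<Rightarrow> real \<Rightarrow> real \<Rightarrow> real" where
  "sff_a \<mu> = zeta_lincomb (1 / (1 + \<mu>\<^sup>2)) (- (\<mu>\<^sup>2 / (1 + \<mu>\<^sup>2)))"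

definition sff_b :: "real \<Rightarrow> real \<Rightarrow> real \<Rightarrow> real" where
  "sff_b \<mu> = zeta_lincomb (\<mu> / (1 + \<mu>\<^sup>2)) (\<mu> / (1 + \<mu>\<^sup>2))"

definition sff_c :: "real \<Rightarrow> real \<Rightarrow> real \<Rightarrow> real" where
  "sff_c \<mu> = zeta_lincomb (\<mu>\<^sup>2 / (1 + \<mu>\<^sup>2)) (- (1 / (1 + \<mu>\<^sup>2)))"

lemma sff_odes:
  fixes \<mu> :: real
  assumes x: "x0 < x"
  defines "a \<equiv> sff_a \<mu> x0" and "b \<equiv> sff_b \<mu> x0" and "c \<equiv> sff_c \<mu> x0"
  obtains ax bx cx where "(a has_real_derivative ax) (at x)" "(b has_real_derivative bx) (at x)"
    "(c has_real_derivative cx) (at x)"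
    "ax + \<mu> * bx = 2 * a x + 4 * \<mu> * b x - 2 * c x"
    "bx + \<mu> * cx = -2 * \<mu> * a x + 4 * b x + 2 * \<mu> * c x"
    "a x * c x - (b x)\<^sup>2 = -1"
proof -
  define z where "z = zeta x0 x"
  define i where "i = inverse (zeta x0 x)"
  define k where "k = inverse (1 + \<mu>\<^sup>2)"
  define dz where "dz = 2 * z + 2 * i"
  define di where "di = - 2 * (i + i ^ 3)"
  have zi: "z * i = 1" using zeta_pos[OF x] unfolding z_def i_def by simp
  have k: "(1 + \<mu>\<^sup>2) * k = 1"
    unfolding k_def using zero_le_power2[of \<mu>] by (intro right_inverse) linarith
  note d = has_real_derivative_zeta_lincomb[OF x]
  note defs = z_def i_def k_def dz_def di_def divide_inverse
  have da: "(a has_real_derivative k * dz - \<mu>\<^sup>2 * k * di) (at x)"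
    unfolding a_def sff_a_def by (rule DERIV_cong[OF d]) (simp add: defs algebra_simps)
  have db: "(b has_real_derivative \<mu> * k * dz + \<mu> * k * di) (at x)"
    unfolding b_def sff_b_def by (rule DERIV_cong[OF d]) (simp add: defs algebra_simps)
  have dc: "(c has_real_derivative \<mu>\<^sup>2 * k * dz - k * di) (at x)"
    unfolding c_def sff_c_def by (rule DERIV_cong[OF d]) (simp add: defs algebra_simps)
  have abc_values: "a x = k * z - \<mu>\<^sup>2 * k * i" "b x = \<mu> * k * z + \<mu> * k * i"
    "c x = \<mu>\<^sup>2 * k * z - k * i"
    unfolding a_def b_def c_def sff_a_def sff_b_def sff_c_def zeta_lincomb_def
    by (simp_all add: defs algebra_simps)
  have "a x * c x - (b x)\<^sup>2 = - (((1 + \<mu>\<^sup>2) * k) * ((1 + \<mu>\<^sup>2) * k) * (z * i))"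
    unfolding abc_values by (simp add: algebra_simps power2_eq_square)
  then have gauss: "a x * c x - (b x)\<^sup>2 = -1" using zi k by simp
  have "k * dz - \<mu>\<^sup>2 * k * di + \<mu> * (\<mu> * k * dz + \<mu> * k * di) = 2 * a x + 4 * \<mu> * b x - 2 * c x"
    "\<mu> * k * dz + \<mu> * k * di + \<mu> * (\<mu>\<^sup>2 * k * dz - k * di) = -2 * \<mu> * a x + 4 * b x + 2 * \<mu> * c x"
    unfolding abc_values dz_def by (simp_all add: algebra_simps power2_eq_square)
  then show ?thesis by (rule that[OF da db dc _ _ gauss])
qed

lemma open_dp_nondegenerate:
  assumes "dp_solution u0 T u"
  shows "open {p. 0 < snd p \<and> ereal (snd p) < T \<and> wedge (om1 u) (om2 u \<mu> \<sigma>) p \<noteq> 0}"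
proof -
  let ?S = "{p :: real \<times> real. 0 < snd p \<and> ereal (snd p) < T}"
  let ?W = "wedge (om1 u) (om2 u \<mu> \<sigma>)"
  have "continuous (at q) ?W" if q: "q \<in> ?S" for q
  proof -
    obtain Mx Mt Fx Ft where "has_partials (mm u) Mx Mt q" "has_partials (FF u) Fx Ft q"
      using dp_solution_m_F_structure[OF assms] q by blast
    then have "continuous (at q) (mm u)" "continuous (at q) (FF u)"
      by (auto dest: has_derivative_continuous)
    then show ?thesis
      unfolding wedge_def[abs_def] om1_def om2_def by (auto intro!: continuous_intros)
  qed
  then have "continuous_on ?S ?W"
    by (intro continuous_at_imp_continuous_on) auto
  moreover have "{p. 0 < snd p \<and> ereal (snd p) < T \<and> ?W p \<noteq> 0} = ?S \<inter> ?W -` (- {0})"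
    by auto
  ultimately show ?thesis
    by (auto intro: continuous_open_preimage open_time_strip)
qed

lemma dp_pseudospherical_structure_on:
  fixes u :: "real \<Rightarrow> real \<Rightarrow> real"
  assumes V: "\<And>q. q \<in> V \<Longrightarrow> x0 < fst q"
    and dp: "\<And>q. q \<in> V \<Longrightarrow> \<exists>Mx Mt Fx Ft. has_partials (mm u) Mx Mt q \<and> has_partials (FF u) Fx Ft q
      \<and> Fx - Mt = -2 * FF u q"
    and sign: "\<sigma> = 1 \<or> \<sigma> = -1"
  shows "\<exists>a b c. smooth_on V a \<and> smooth_on V b \<and> smooth_on V c \<and>
    structure_equations_on V (om1 u) (om2 u \<mu> \<sigma>) (om3 u \<mu> \<sigma>)
      (form_add (form_scale a (om1 u)) (form_scale b (om2 u \<mu> \<sigma>)))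
      (form_add (form_scale b (om1 u)) (form_scale c (om2 u \<mu> \<sigma>)))"
proof -
  define a where "a q = sff_a \<mu> x0 (fst q)" for q :: "real \<times> real"
  define b where "b q = sff_b \<mu> x0 (fst q)" for q :: "real \<times> real"
  define c where "c q = sff_c \<mu> x0 (fst q)" for q :: "real \<times> real"
  define \<omega>1 \<omega>2 \<omega>12 where "\<omega>1 = om1 u" and "\<omega>2 = om2 u \<mu> \<sigma>" and "\<omega>12 = om3 u \<mu> \<sigma>"
  define \<omega>13 \<omega>23 where "\<omega>13 = form_add (form_scale a \<omega>1) (form_scale b \<omega>2)"
    and "\<omega>23 = form_add (form_scale b \<omega>1) (form_scale c \<omega>2)"
  have "smooth_on V a" "smooth_on V b" "smooth_on V c"
    unfolding a_def b_def c_def sff_a_def sff_b_def sff_c_def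
    by (rule smooth_on_zeta_lincomb, rule V, assumption)+
  moreover have "structure_equations_on V \<omega>1 \<omega>2 \<omega>12 \<omega>13 \<omega>23"
  proof (rule structure_equations_onI)
    fix q
    assume q: "q \<in> V"
    obtain Mx Mt Fx Ft where m: "has_partials (mm u) Mx Mt q" and F: "has_partials (FF u) Fx Ft q"
      and rel: "Fx - Mt = -2 * FF u q"
      using dp[OF q] by blast
    obtain ax bx cx where da: "(sff_a \<mu> x0 has_real_derivative ax) (at (fst q))"
      and db: "(sff_b \<mu> x0 has_real_derivative bx) (at (fst q))"
      and dc: "(sff_c \<mu> x0 has_real_derivative cx) (at (fst q))"
      and odes: "ax + \<mu> * bx = 2 * a q + 4 * \<mu> * b q - 2 * c q"
        "bx + \<mu> * cx = -2 * \<mu> * a q + 4 * b q + 2 * \<mu> * c q" "a q * c q - (b q)\<^sup>2 = -1"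
      using sff_odes[OF V[OF q]] unfolding a_def b_def c_def by blast
    have "has_partials a ax 0 q" "has_partials b bx 0 q" "has_partials c cx 0 q"
      unfolding a_def[abs_def] b_def[abs_def] c_def[abs_def]
      by (rule has_partials_fst, fact)+
    from dp_structure_equations_at[OF m F rel this odes sign]
    show "ext_deriv_at \<omega>1 (wedge \<omega>12 \<omega>2 q) q \<and> ext_deriv_at \<omega>2 (wedge \<omega>1 \<omega>12 q) q \<and>
      wedge \<omega>1 \<omega>13 q + wedge \<omega>2 \<omega>23 q = 0 \<and> ext_deriv_at \<omega>12 (- wedge \<omega>13 \<omega>23 q) q \<and>
      ext_deriv_at \<omega>13 (wedge \<omega>12 \<omega>23 q) q \<and> ext_deriv_at \<omega>23 (- wedge \<omega>12 \<omega>13 q) q"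
      unfolding \<omega>1_def \<omega>2_def \<omega>12_def \<omega>13_def \<omega>23_def .
  qed
  ultimately show ?thesis
    unfolding \<omega>1_def \<omega>2_def \<omega>12_def \<omega>13_def \<omega>23_def by blast
qed

theorem theorem2p4:
  fixes u0 :: "real \<Rightarrow> real" and u :: "real \<Rightarrow> real \<Rightarrow> real" and T :: ereal
    and \<mu> \<sigma> :: real and U :: "(real \<times> real) set"
  assumes u0_H4: "sobolev 4 u0"
    and u0_nontriv: "\<exists>x. u0 x \<noteq> 0"
    and T_pos: "T > 0"
    and sol: "dp_solution u0 T u"
    and maximal: "\<And>T' u'. dp_solution u0 T' u' \<Longrightarrow> T' \<le> T"
    and sign: "\<sigma> = 1 \<or> \<sigma> = -1"
    and U_comp: "U \<in> components {p. 0 < snd p \<and> ereal (snd p) < T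
                                   \<and> wedge (om1 u) (om2 u \<mu> \<sigma>) p \<noteq> 0}"
    and U_sc: "simply_connected U"
  shows "\<forall>p\<in>U. \<exists>V. open V \<and> p \<in> V \<and> V \<subseteq> U \<and>
           (\<exists>a b c. smooth_on V a \<and> smooth_on V b \<and> smooth_on V c \<and>
              (let \<omega>1 = om1 u; \<omega>2 = om2 u \<mu> \<sigma>; \<omega>12 = om3 u \<mu> \<sigma>;
                   \<omega>13 = form_add (form_scale a \<omega>1) (form_scale b \<omega>2);
                   \<omega>23 = form_add (form_scale b \<omega>1) (form_scale c \<omega>2)
               in ext_deriv_on V \<omega>1 (wedge \<omega>12 \<omega>2) \<and>
                  ext_deriv_on V \<omega>2 (wedge \<omega>1 \<omega>12) \<and>
                  (\<forall>q\<in>V. wedge \<omega>1 \<omega>13 q + wedge \<omega>2 \<omega>23 q = 0) \<and>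
                  ext_deriv_on V \<omega>12 (\<lambda>q. - wedge \<omega>13 \<omega>23 q) \<and>
                  ext_deriv_on V \<omega>13 (wedge \<omega>12 \<omega>23) \<and>
                  ext_deriv_on V \<omega>23 (\<lambda>q. - wedge \<omega>12 \<omega>13 q)))"
proof -
  have "open U"
    using open_components[OF open_dp_nondegenerate[OF sol] U_comp] .
  have U_strip: "0 < snd q \<and> ereal (snd q) < T" if "q \<in> U" for q
    using in_components_subset[OF U_comp] that by auto
  have "\<exists>V. open V \<and> p \<in> V \<and> V \<subseteq> U \<and> (\<exists>a b c. smooth_on V a \<and> smooth_on V b \<and> smooth_on V c \<and>
      structure_equations_on V (om1 u) (om2 u \<mu> \<sigma>) (om3 u \<mu> \<sigma>)
        (form_add (form_scale a (om1 u)) (form_scale b (om2 u \<mu> \<sigma>)))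
        (form_add (form_scale b (om1 u)) (form_scale c (om2 u \<mu> \<sigma>))))"
    if p: "p \<in> U" for p
  proof (rule exI[of _ "U \<inter> {q. fst p - 1 < fst q}"], intro conjI)
    let ?V = "U \<inter> {q. fst p - 1 < fst q}"
    show "open ?V" "p \<in> ?V" "?V \<subseteq> U"
      using \<open>open U\<close> p by (auto intro!: open_Int open_Collect_less continuous_intros)
    show "\<exists>a b c. smooth_on ?V a \<and> smooth_on ?V b \<and> smooth_on ?V c \<and>
      structure_equations_on ?V (om1 u) (om2 u \<mu> \<sigma>) (om3 u \<mu> \<sigma>)
        (form_add (form_scale a (om1 u)) (form_scale b (om2 u \<mu> \<sigma>)))
        (form_add (form_scale b (om1 u)) (form_scale c (om2 u \<mu> \<sigma>)))"
      using U_strip by (intro dp_pseudospherical_structure_on dp_solution_m_F_structure[OF sol] sign) auto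
  qed
  then show ?thesis
    unfolding structure_equations_on_def Let_def by blast
qed

end
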